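(* Let $n$ be odd and $\alpha>0$ with $\alpha\,bin(n,\tfrac12,i)\le1$ for all $i$. Let $P_e$ be the distribution on $\{0,1\}^{n+1}$ in which coordinate $i\in\{0,\ldots,n\}$ is independently $1$ with probability $S_e(i)$. Then the number of strings $u$ with $P_e(u)\ge e^{-\sqrt n/2}$ is at most $e^{\sqrt n/2}$, and the total probability $\sum_{u:\,P_e(u)<e^{-\sqrt n/2}}P_e(u)$ is at most $e^{\sqrt\alpha(2\pi n)^{1/4}-\sqrt n/4}$. The same holds for the analogous distribution induced by $S_o$.
   Context: $bin(n,p,k)=\binom nk p^k(1-p)^{n-k}$. $S_e(i)=\alpha\,bin(n,\tfrac12,i)$ for even $i$ and $0$ for odd $i$; $S_o(i)=\alpha\,bin(n,\tfrac12,i)$ for odd $i$ and $0$ for even $i$, for $i\in\{0,\ldots,n\}$. *)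

theory Defs
  imports Complex_Main
begin

definition bin :: "nat \<Rightarrow> real \<Rightarrow> nat \<Rightarrow> real" where
  "bin n p k = real (n choose k) * p ^ k * (1 - p) ^ (n - k)"

definition S_e :: "real \<Rightarrow> nat \<Rightarrow> nat \<Rightarrow> real" where
  "S_e \<alpha> n i = (if even i then \<alpha> * bin n (1/2) i else 0)"

definition S_o :: "real \<Rightarrow> nat \<Rightarrow> nat \<Rightarrow> real" where
  "S_o \<alpha> n i = (if odd i then \<alpha> * bin n (1/2) i else 0)"

text \<open>A string u in {0,1}^(n+1) is represented by the set U of coordinates
  i in {0..n} with u_i = 1.  The product distribution with coordinate i equal
  to 1 independently with probability S i assigns it the following mass.\<close>
definition prod_dist :: "(nat \<Rightarrow> real) \<Rightarrow> nat \<Rightarrow> nat set \<Rightarrow> real" where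
  "prod_dist S n U = (\<Prod>i\<in>{0..n}. if i \<in> U then S i else 1 - S i)"

end

theory Submission
  imports Defs
begin

text \<open>For any product distribution P with coordinate probabilities S i in [0,1] and any
  threshold t > 0, at most 1/t strings have mass at least t, and the mass below t is at most
  sqrt t * (\<Sum>U. sqrt (P U)) = sqrt t * (\<Prod>i. sqrt (S i) + sqrt (1 - S i)), which is at most
  sqrt t * exp (\<Sum>i. sqrt (S i)).  So with t = exp (- sqrt n / 2) everything reduces to bounding
  the sum of sqrt (bin n (1/2) i) over one parity class by L = (2 pi n) powr (1/4).
  With the weights w i = 1 + (2i - n)^2 / n, AM-GM gives
  sqrt (b i) \<le> (L * b i * w i + 1 / (L * w i)) / 2.  As n is odd, i \<mapsto> n - i swaps the two
  parity classes, so the first part sums over a class to half of \<Sum>i. b i * w i = 2 (the binomial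
  variance is n/4); and on a class the values |2i - n| are distinct odd numbers, so
  \<Sum> 1 / w i \<le> sqrt n + 1 \<le> L^2.\<close>

lemma real_sqrt_prod: "sqrt (\<Prod>i\<in>A. f i) = (\<Prod>i\<in>A. sqrt (f i))"
  by (induction A rule: infinite_finite_induct) (auto simp: real_sqrt_mult)

lemma sum_Pow_prod_if:
  fixes f g :: "'a \<Rightarrow> 'b :: comm_semiring_1"
  assumes "finite A"
  shows "(\<Sum>U\<in>Pow A. \<Prod>i\<in>A. if i \<in> U then f i else g i) = (\<Prod>i\<in>A. f i + g i)"
proof -
  have "(\<Prod>i\<in>A. if i \<in> U then f i else g i) = (\<Prod>i\<in>U. f i) * (\<Prod>i\<in>A - U. g i)"
    if "U \<in> Pow A" for U
    using that prod.If_cases[OF assms, of "\<lambda>i. i \<in> U" f g] by (simp add: Int_absorb1 Diff_eq)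
  then show ?thesis
    by (simp add: prod_add[OF assms])
qed

lemma sum_prod_dist: "(\<Sum>U\<in>Pow {0..n}. prod_dist S n U) = 1"
  unfolding prod_dist_def by (simp add: sum_Pow_prod_if)

lemma sum_sqrt_prod_dist:
  "(\<Sum>U\<in>Pow {0..n}. sqrt (prod_dist S n U)) = (\<Prod>i\<in>{0..n}. sqrt (S i) + sqrt (1 - S i))"
  unfolding prod_dist_def real_sqrt_prod by (simp add: if_distrib sum_Pow_prod_if)

lemma prod_dist_nonneg:
  assumes "\<forall>i\<in>{0..n}. 0 \<le> S i \<and> S i \<le> 1"
  shows "0 \<le> prod_dist S n U"
  unfolding prod_dist_def using assms by (intro prod_nonneg) auto

lemma card_threshold_le:
  fixes f :: "'a \<Rightarrow> real"
  assumes "finite A" "\<forall>x\<in>A. 0 \<le> f x" "t > 0"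
  shows "real (card {x\<in>A. t \<le> f x}) \<le> sum f A / t"
proof -
  have "real (card {x\<in>A. t \<le> f x}) * t = (\<Sum>x\<in>{x\<in>A. t \<le> f x}. t)"
    by simp
  also have "\<dots> \<le> (\<Sum>x\<in>{x\<in>A. t \<le> f x}. f x)"
    by (rule sum_mono) simp
  also have "\<dots> \<le> sum f A"
    using assms by (intro sum_mono2) auto
  finally show ?thesis
    using \<open>t > 0\<close> by (simp add: field_simps)
qed

lemma sum_below_threshold_le:
  fixes f :: "'a \<Rightarrow> real"
  assumes "finite A" "\<forall>x\<in>A. 0 \<le> f x" "0 \<le> t"
  shows "(\<Sum>x\<in>{x\<in>A. f x < t}. f x) \<le> sqrt t * (\<Sum>x\<in>A. sqrt (f x))"
proof -
  have "f x \<le> sqrt t * sqrt (f x)" if "x \<in> A" "f x < t" for x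
  proof -
    have "sqrt (f x) \<le> sqrt t"
      using that by simp
    then have "sqrt (f x) * sqrt (f x) \<le> sqrt t * sqrt (f x)"
      using assms that by (intro mult_right_mono) auto
    then show ?thesis
      using assms that by simp
  qed
  then have "(\<Sum>x\<in>{x\<in>A. f x < t}. f x) \<le> (\<Sum>x\<in>{x\<in>A. f x < t}. sqrt t * sqrt (f x))"
    by (intro sum_mono) auto
  also have "\<dots> \<le> (\<Sum>x\<in>A. sqrt t * sqrt (f x))"
    using assms by (intro sum_mono2) auto
  finally show ?thesis
    by (simp add: sum_distrib_left)
qed

lemma sqrt_add_sqrt_one_minus_le_exp:
  fixes s :: real
  assumes "0 \<le> s" "s \<le> 1"
  shows "sqrt s + sqrt (1 - s) \<le> exp (sqrt s)"
proof -
  have "sqrt (1 - s) \<le> 1"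
    using assms by simp
  then show ?thesis
    using exp_ge_add_one_self[of "sqrt s"] by linarith
qed

lemma prod_dist_threshold_bounds:
  assumes S: "\<forall>i\<in>{0..n}. 0 \<le> S i \<and> S i \<le> 1" and "t > 0"
  shows "real (card {U \<in> Pow {0..n}. t \<le> prod_dist S n U}) \<le> 1 / t"
    and "(\<Sum>U \<in> {U \<in> Pow {0..n}. prod_dist S n U < t}. prod_dist S n U)
           \<le> sqrt t * exp (\<Sum>i\<in>{0..n}. sqrt (S i))"
proof -
  have P: "\<forall>U\<in>Pow {0..n}. 0 \<le> prod_dist S n U"
    using prod_dist_nonneg[OF S] by blast
  show "real (card {U \<in> Pow {0..n}. t \<le> prod_dist S n U}) \<le> 1 / t"
    using card_threshold_le[OF _ P \<open>t > 0\<close>] by (simp add: sum_prod_dist)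
  have "(\<Sum>U\<in>Pow {0..n}. sqrt (prod_dist S n U)) \<le> exp (\<Sum>i\<in>{0..n}. sqrt (S i))"
    unfolding sum_sqrt_prod_dist exp_sum[OF finite_atLeastAtMost]
    using S by (intro prod_mono) (simp add: sqrt_add_sqrt_one_minus_le_exp)
  then have "sqrt t * (\<Sum>U\<in>Pow {0..n}. sqrt (prod_dist S n U))
      \<le> sqrt t * exp (\<Sum>i\<in>{0..n}. sqrt (S i))"
    using \<open>t > 0\<close> by (intro mult_left_mono) auto
  with sum_below_threshold_le[OF _ P] \<open>t > 0\<close>
  show "(\<Sum>U \<in> {U \<in> Pow {0..n}. prod_dist S n U < t}. prod_dist S n U)
           \<le> sqrt t * exp (\<Sum>i\<in>{0..n}. sqrt (S i))"
    by (meson finite_Pow_iff finite_atLeastAtMost less_imp_le order_trans)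
qed

lemma sum_bin: "(\<Sum>k\<in>{0..n}. bin n p k) = 1"
  using binomial_ring[of p "1 - p" n] by (simp add: bin_def atLeast0AtMost)

lemma bin_half: "i \<le> n \<Longrightarrow> bin n (1/2) i = real (n choose i) / 2 ^ n"
  by (simp add: bin_def power_one_over flip: power_add)

lemma double_choose_linear_sum: "2 * (\<Sum>i\<le>n. i * (n choose i)) = n * 2 ^ n"
  by (cases n) (simp_all add: choose_linear_sum)

lemma choose_quadratic_sum: "4 * (\<Sum>i\<le>n. i * i * (n choose i)) = n * (n + 1) * 2 ^ n"
proof (cases n)
  case (Suc m)
  have "(\<Sum>i\<le>Suc m. i * i * (Suc m choose i)) = (\<Sum>i\<le>m. Suc i * (Suc i * (Suc m choose Suc i)))"
    by (subst sum.atMost_Suc_shift) (simp only: mult_0 add_0 mult.assoc)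
  also have "\<dots> = (\<Sum>i\<le>m. Suc m * (i * (m choose i)) + Suc m * (m choose i))"
    by (intro sum.cong refl) (simp only: Suc_times_binomial, simp add: algebra_simps)
  also have "\<dots> = Suc m * (\<Sum>i\<le>m. i * (m choose i)) + Suc m * 2 ^ m"
    by (simp only: sum.distrib choose_row_sum flip: sum_distrib_left)
  finally have "4 * (\<Sum>i\<le>Suc m. i * i * (Suc m choose i))
      = 2 * Suc m * (2 * (\<Sum>i\<le>m. i * (m choose i))) + 4 * Suc m * 2 ^ m"
    by (simp only: algebra_simps)
  also have "\<dots> = Suc m * (Suc m + 1) * 2 ^ Suc m"
    unfolding double_choose_linear_sum by (simp add: algebra_simps)
  finally show ?thesis
    using Suc by simp
qed simp

lemma choose_deviation_square_sum:
  "(\<Sum>i\<le>n. real (n choose i) * (2 * real i - real n)^2) = real n * 2 ^ n"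
proof -
  have "(\<Sum>i\<le>n. real (n choose i) * (2 * real i - real n)^2)
      = 4 * real (\<Sum>i\<le>n. i * i * (n choose i)) - 2 * real n * (2 * real (\<Sum>i\<le>n. i * (n choose i)))
        + real n ^ 2 * real (\<Sum>i\<le>n. n choose i)"
    unfolding of_nat_sum
    by (simp add: power2_eq_square algebra_simps sum.distrib sum_subtractf sum_distrib_left)
  also have "\<dots> = real n * 2 ^ n"
    unfolding choose_row_sum
    using arg_cong[OF choose_quadratic_sum[of n], of real] arg_cong[OF double_choose_linear_sum[of n], of real]
    by (simp add: power2_eq_square algebra_simps)
  finally show ?thesis .
qed

lemma bin_half_deviation_square_sum:
  "(\<Sum>i\<in>{0..n}. bin n (1/2) i * (2 * real i - real n)^2) = real n"
proof -
  have "(\<Sum>i\<in>{0..n}. bin n (1/2) i * (2 * real i - real n)^2)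
      = (\<Sum>i\<le>n. real (n choose i) * (2 * real i - real n)^2) / 2 ^ n"
    by (simp add: atLeast0AtMost bin_half sum_divide_distrib)
  then show ?thesis
    by (simp add: choose_deviation_square_sum)
qed

lemma sum_reflection_complementary_half:
  fixes g :: "nat \<Rightarrow> 'a :: field_char_0"
  assumes Q: "\<forall>i\<le>n. Q (n - i) = (\<not> Q i)" and g: "\<forall>i\<le>n. g (n - i) = g i"
  shows "(\<Sum>i\<in>{i\<in>{0..n}. Q i}. g i) = (\<Sum>i\<in>{0..n}. g i) / 2"
proof -
  have "(\<Sum>i\<in>{i\<in>{0..n}. Q i}. g i) = (\<Sum>i\<in>{i\<in>{0..n}. \<not> Q i}. g i)"
    using Q g by (intro sum.reindex_bij_witness[where i="\<lambda>i. n - i" and j="\<lambda>i. n - i"]) auto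
  moreover have "(\<Sum>i\<in>{i\<in>{0..n}. Q i}. g i) + (\<Sum>i\<in>{i\<in>{0..n}. \<not> Q i}. g i) = (\<Sum>i\<in>{0..n}. g i)"
    by (rule sum.union_disjoint[symmetric, THEN trans]) (auto intro: sum.cong)
  ultimately show ?thesis
    by (simp add: field_simps)
qed

lemma sum_ratio_odd_squares_le:
  fixes c :: real and j N :: nat
  assumes "0 \<le> c" "1 \<le> j"
  shows "(\<Sum>m<N. c / (c + (2 * real m + 1)^2)) \<le> real j + c / (4 * real j)"
proof -
  define f where "f m = c / (c + (2 * real m + 1)^2)" for m :: nat
  define g where "g m = - c / (4 * real m)" for m :: nat
  have f_nonneg: "0 \<le> f m" for m
    unfolding f_def using \<open>0 \<le> c\<close> by simp
  have f_le_1: "f m \<le> 1" for m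
    unfolding f_def using \<open>0 \<le> c\<close> by (simp add: divide_le_eq_1 add_nonneg_pos)
  have f_le_g: "f m \<le> g (Suc m) - g m" if "1 \<le> m" for m
  proof -
    have "4 * real m * (real m + 1) \<le> c + (2 * real m + 1)^2"
      using \<open>0 \<le> c\<close> by (simp add: power2_eq_square algebra_simps)
    then have "f m \<le> c / (4 * real m * (real m + 1))"
      unfolding f_def using \<open>0 \<le> c\<close> that by (intro divide_left_mono) (auto simp: add_nonneg_pos)
    also have "\<dots> = g (Suc m) - g m"
      unfolding g_def using that by (simp add: field_simps)
    finally show ?thesis .
  qed
  define M where "M = max N j"
  have "(\<Sum>m<N. f m) \<le> (\<Sum>m<M. f m)"
    unfolding M_def by (intro sum_mono2) (auto simp: f_nonneg)
  also have "\<dots> = (\<Sum>m<j. f m) + (\<Sum>m=j..<M. f m)"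
    unfolding M_def by (simp flip: atLeast0LessThan sum.atLeastLessThan_concat)
  also have "(\<Sum>m<j. f m) \<le> real j"
    using sum_mono[of "{..<j}" f "\<lambda>_. 1"] f_le_1 by simp
  also have "(\<Sum>m=j..<M. f m) \<le> (\<Sum>m=j..<M. g (Suc m) - g m)"
    using \<open>1 \<le> j\<close> by (intro sum_mono f_le_g) simp
  also have "\<dots> = g M - g j"
    unfolding M_def by (intro sum_Suc_diff') simp
  also have "\<dots> \<le> c / (4 * real j)"
    unfolding g_def using \<open>0 \<le> c\<close> by simp
  finally show ?thesis
    unfolding f_def by simp
qed

lemma reflection_complementary_odd:
  fixes n :: nat
  assumes "\<forall>i\<le>n. Q (n - i) = (\<not> Q i)"
  shows "odd n"
proof
  assume "even n"
  then have "n - n div 2 = n div 2"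
    by presburger
  then show False
    using assms by (metis div_le_dividend)
qed

lemma exists_nat_add_square_div_le:
  fixes x :: real
  assumes "0 < x"
  shows "\<exists>j::nat. 1 \<le> j \<and> real j + x^2 / (4 * real j) \<le> x + 1"
proof (intro exI conjI)
  define j where "j = nat \<lceil>x / 2\<rceil>"
  have j_ge: "x / 2 \<le> real j" and j_le: "real j \<le> x / 2 + 1"
    unfolding j_def using assms by linarith+
  then show "1 \<le> j"
    using assms by linarith
  have "x^2 / (4 * real j) \<le> x * (2 * real j) / (4 * real j)"
    using assms j_ge by (intro divide_right_mono) (auto simp: power2_eq_square)
  also have "\<dots> = x / 2"
    using assms j_ge by simp
  finally show "real j + x^2 / (4 * real j) \<le> x + 1"
    using j_le by linarith
qed

lemma sum_class_inverse_weight_le: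
  assumes Q: "\<forall>i\<le>n. Q (n - i) = (\<not> Q i)"
  shows "(\<Sum>i\<in>{i\<in>{0..n}. Q i}. real n / (real n + (2 * real i - real n)^2)) \<le> sqrt n + 1"
proof -
  obtain k where n: "n = 2 * k + 1"
    using reflection_complementary_odd[OF Q] oddE by blast
  define C where "C = {i\<in>{0..n}. Q i}"
  define h where "h m = real n / (real n + (2 * real m + 1)^2)" for m :: nat
  define \<phi> where "\<phi> i = (if k < i then i - k - 1 else k - i)" for i
    \<comment> \<open>\<phi> i = (|2i - n| - 1) / 2\<close>
  have h_\<phi>: "real n / (real n + (2 * real i - real n)^2) = h (\<phi> i)" for i
    unfolding h_def \<phi>_def n by (simp add: power2_eq_square algebra_simps)
  have "inj_on \<phi> C"
  proof
    fix x y assume "x \<in> C" "y \<in> C" "\<phi> x = \<phi> y"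
    show "x = y"
    proof (rule ccontr)
      assume "x \<noteq> y"
      then have "y = n - x" "x \<le> n"
        using \<open>\<phi> x = \<phi> y\<close> n unfolding \<phi>_def by (auto split: if_splits)
      then show False
        using Q \<open>x \<in> C\<close> \<open>y \<in> C\<close> unfolding C_def by auto
    qed
  qed
  obtain j :: nat where "1 \<le> j" "real j + (sqrt n)^2 / (4 * real j) \<le> sqrt n + 1"
    using exists_nat_add_square_div_le[of "sqrt n"] n by auto
  have "(\<Sum>i\<in>C. h (\<phi> i)) = (\<Sum>m\<in>\<phi> ` C. h m)"
    using \<open>inj_on \<phi> C\<close> by (simp add: sum.reindex)
  also have "\<dots> \<le> (\<Sum>m<k+1. h m)"
    unfolding C_def \<phi>_def h_def n by (intro sum_mono2) auto
  also have "\<dots> \<le> sqrt n + 1"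
    unfolding h_def using sum_ratio_odd_squares_le[of "real n" j "k+1"] \<open>1 \<le> j\<close>
      \<open>real j + (sqrt n)^2 / (4 * real j) \<le> sqrt n + 1\<close> by simp
  finally show ?thesis
    unfolding C_def h_\<phi> .
qed

lemma sum_sqrt_bin_half_class_le:
  assumes Q: "\<forall>i\<le>n. Q (n - i) = (\<not> Q i)"
  shows "(\<Sum>i\<in>{i\<in>{0..n}. Q i}. sqrt (bin n (1/2) i)) \<le> (2 * pi * real n) powr (1/4)"
proof -
  define C where "C = {i\<in>{0..n}. Q i}"
  define L where "L = (2 * pi * real n) powr (1/4)"
  define b where "b i = bin n (1/2) i" for i
  define w where "w i = 1 + (2 * real i - real n)^2 / real n" for i
  have "1 \<le> n"
    using reflection_complementary_odd[OF Q] by (simp add: odd_pos Suc_le_eq)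
  then have L_pos: "0 < L" and w_pos: "0 < w i" for i
    unfolding L_def w_def by (simp_all add: add_pos_nonneg)
  have b_nonneg: "0 \<le> b i" for i
    unfolding b_def bin_def by simp
  have amgm: "sqrt (b i) \<le> (L * (b i * w i) + 1 / (L * w i)) / 2" for i
    using arith_geo_mean_sqrt[of "L * b i * w i" "1 / (L * w i)"] L_pos w_pos[of i] b_nonneg[of i]
    by (simp add: field_simps)
  have bw_sum: "(\<Sum>i\<in>C. b i * w i) = 1"
  proof -
    have "b (n - i) * w (n - i) = b i * w i" if "i \<le> n" for i
      unfolding b_def w_def using that
      by (simp add: bin_half binomial_symmetric[symmetric] power2_eq_square algebra_simps)
    then have "(\<Sum>i\<in>C. b i * w i) = (\<Sum>i\<in>{0..n}. b i * w i) / 2"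
      unfolding C_def using Q by (intro sum_reflection_complementary_half) auto
    also have "(\<Sum>i\<in>{0..n}. b i * w i)
        = (\<Sum>i\<in>{0..n}. b i) + (\<Sum>i\<in>{0..n}. b i * (2 * real i - real n)^2) / real n"
      unfolding w_def by (simp add: distrib_left sum.distrib sum_divide_distrib)
    also have "\<dots> = 2"
      unfolding b_def sum_bin bin_half_deviation_square_sum using \<open>1 \<le> n\<close> by simp
    finally show ?thesis
      by simp
  qed
  have inverse_w_sum: "(\<Sum>i\<in>C. 1 / w i) \<le> L * L"
  proof -
    have "(\<Sum>i\<in>C. 1 / w i) \<le> sqrt n + 1"
      using sum_class_inverse_weight_le[OF Q] \<open>1 \<le> n\<close>
      unfolding C_def w_def by (simp add: field_simps)
    moreover have "L * L = sqrt (2 * pi) * sqrt n"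
      unfolding L_def by (simp flip: powr_add add: powr_half_sqrt real_sqrt_mult)
    moreover have "2 \<le> sqrt (2 * pi)"
      using pi_ge_two real_sqrt_le_iff[of 4 "2 * pi"] by simp
    moreover have "1 \<le> sqrt n"
      using \<open>1 \<le> n\<close> by simp
    ultimately show ?thesis
      using mult_right_mono[of 2 "sqrt (2 * pi)" "sqrt n"] by linarith
  qed
  have "(\<Sum>i\<in>C. sqrt (b i)) \<le> (\<Sum>i\<in>C. L / 2 * (b i * w i) + 1 / (2 * L) * (1 / w i))"
    using amgm by (intro sum_mono) (simp add: field_simps)
  also have "\<dots> = L / 2 * (\<Sum>i\<in>C. b i * w i) + 1 / (2 * L) * (\<Sum>i\<in>C. 1 / w i)"
    by (simp add: sum.distrib sum_distrib_left)
  also have "\<dots> \<le> L / 2 + 1 / (2 * L) * (L * L)"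
    unfolding bw_sum using inverse_w_sum L_pos by (intro add_mono mult_left_mono) auto
  also have "\<dots> = L"
    using L_pos by simp
  finally show ?thesis
    unfolding C_def b_def L_def .
qed

lemma class_dist_threshold_bounds:
  fixes \<alpha> :: real and Q :: "nat \<Rightarrow> bool"
  assumes Q: "\<forall>i\<le>n. Q (n - i) = (\<not> Q i)" and "\<alpha> > 0"
    and le1: "\<forall>i\<in>{0..n}. \<alpha> * bin n (1/2) i \<le> 1"
    and S: "\<And>i. S i = (if Q i then \<alpha> * bin n (1/2) i else 0)"
  shows "real (card {U \<in> Pow {0..n}. prod_dist S n U \<ge> exp (- sqrt n / 2)}) \<le> exp (sqrt n / 2)
         \<and> (\<Sum>U \<in> {U \<in> Pow {0..n}. prod_dist S n U < exp (- sqrt n / 2)}. prod_dist S n U)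
             \<le> exp (sqrt \<alpha> * (2 * pi * real n) powr (1/4) - sqrt n / 4)"
proof -
  have S01: "\<forall>i\<in>{0..n}. 0 \<le> S i \<and> S i \<le> 1"
    using le1 \<open>\<alpha> > 0\<close> by (auto simp: S bin_def)
  have "(\<Sum>i\<in>{0..n}. sqrt (S i)) = (\<Sum>i\<in>{0..n}. if Q i then sqrt \<alpha> * sqrt (bin n (1/2) i) else 0)"
    by (intro sum.cong) (simp_all add: S real_sqrt_mult)
  also have "\<dots> = sqrt \<alpha> * (\<Sum>i\<in>{i\<in>{0..n}. Q i}. sqrt (bin n (1/2) i))"
    unfolding sum.inter_filter[OF finite_atLeastAtMost] sum_distrib_left by (intro sum.cong) simp_all
  also have "\<dots> \<le> sqrt \<alpha> * (2 * pi * real n) powr (1/4)"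
    using sum_sqrt_bin_half_class_le[OF Q] \<open>\<alpha> > 0\<close> by (intro mult_left_mono) auto
  finally have exp_sum_sqrt_le: "exp (\<Sum>i\<in>{0..n}. sqrt (S i)) \<le> exp (sqrt \<alpha> * (2 * pi * real n) powr (1/4))"
    by simp
  define t where "t = exp (- sqrt n / 2)"
  have "0 < t"
    unfolding t_def by simp
  have inverse_t: "1 / t = exp (sqrt n / 2)"
    unfolding t_def by (simp add: exp_minus inverse_eq_divide)
  have sqrt_t: "sqrt t = exp (- sqrt n / 4)"
  proof -
    have "t = exp (- sqrt n / 4) * exp (- sqrt n / 4)"
      unfolding t_def by (simp flip: exp_add)
    then show ?thesis
      by (simp add: real_sqrt_mult)
  qed
  note bounds = prod_dist_threshold_bounds[OF S01 \<open>0 < t\<close>]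
  have "(\<Sum>U \<in> {U \<in> Pow {0..n}. prod_dist S n U < t}. prod_dist S n U)
      \<le> sqrt t * exp (\<Sum>i\<in>{0..n}. sqrt (S i))"
    by (rule bounds(2))
  also have "\<dots> \<le> sqrt t * exp (sqrt \<alpha> * (2 * pi * real n) powr (1/4))"
    using exp_sum_sqrt_le \<open>0 < t\<close> by (intro mult_left_mono) auto
  also have "\<dots> = exp (sqrt \<alpha> * (2 * pi * real n) powr (1/4) - sqrt n / 4)"
    unfolding sqrt_t mult_exp_exp by simp
  finally show ?thesis
    using bounds(1) unfolding inverse_t unfolding t_def by (rule conjI[rotated])
qed

theorem lemma5:
  fixes n :: nat and \<alpha> :: real
  assumes "odd n" and "\<alpha> > 0"
    and "\<forall>i\<in>{0..n}. \<alpha> * bin n (1/2) i \<le> 1"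
  shows "\<forall>S \<in> {S_e \<alpha> n, S_o \<alpha> n}.
           real (card {U \<in> Pow {0..n}. prod_dist S n U \<ge> exp (- sqrt n / 2)}) \<le> exp (sqrt n / 2)
         \<and> (\<Sum>U \<in> {U \<in> Pow {0..n}. prod_dist S n U < exp (- sqrt n / 2)}. prod_dist S n U)
             \<le> exp (sqrt \<alpha> * (2 * pi * real n) powr (1/4) - sqrt n / 4)"
proof -
  have "\<forall>i\<le>n. even (n - i) = (\<not> even i)" and "\<forall>i\<le>n. odd (n - i) = (\<not> odd i)"
    using \<open>odd n\<close> by presburger+
  then show ?thesis
    using class_dist_threshold_bounds[OF _ assms(2,3), of even "S_e \<alpha> n"]
      class_dist_threshold_bounds[OF _ assms(2,3), of odd "S_o \<alpha> n"]
    by (simp add: S_e_def S_o_def)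
qed

end
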